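(* Under the setting of the algorithm in the context, for every initial state $\theta_0$, $\theta(k)$ converges to $\theta_\infty\mathbf{1}_n$ in mean square, where $\theta_\infty=\mathrm{Ave}(\theta_0)+\sum_{i=1}^n\frac{s_i}{n}\sum_{j=0}^\infty\eta_i(j)$.
   Context: $n$ agents communicate over an undirected connected weighted graph with symmetric nonnegative adjacency matrix $A$, weighted degree matrix $D=\mathrm{diag}(A\mathbf{1}_n)$, Laplacian $L=D-A$, and maximal weighted degree $d_{\max}$. $\mathrm{Ave}(x)=\frac1n\mathbf{1}_n^Tx$. The algorithm is $$\theta(k+1)=\theta(k)-hLx(k)+S\eta(k),\qquad x(k)=\theta(k)+\eta(k),\qquad \theta(0)=\theta_0,$$ where $0<h<1/d_{\max}$, $S=\mathrm{diag}(s_1,\dots,s_n)$ with $s_i\in(0,2)$, and the noises $\eta_i(k)$ are mutually independent with $\eta_i(k)\sim\mathrm{Lap}(c_iq_i^k)$ (zero-mean Laplace with density $\frac{1}{2b}e^{-|x|/b}$), $c_i>0$, $q_i\in(|s_i-1|,1)$. *)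

theory Defs
  imports "HOL-Probability.Probability"
begin

text \<open>Agents are indexed by a finite type 'n; vectors are functions 'n => real.\<close>

definition wdeg :: "('n::finite \<Rightarrow> 'n \<Rightarrow> real) \<Rightarrow> 'n \<Rightarrow> real" where
  "wdeg A i = (\<Sum>j\<in>UNIV. A i j)"

definition dmax :: "('n::finite \<Rightarrow> 'n \<Rightarrow> real) \<Rightarrow> real" where
  "dmax A = Max (range (wdeg A))"

definition laplacian_mult :: "('n::finite \<Rightarrow> 'n \<Rightarrow> real) \<Rightarrow> ('n \<Rightarrow> real) \<Rightarrow> 'n \<Rightarrow> real" where
  "laplacian_mult A x i = wdeg A i * x i - (\<Sum>j\<in>UNIV. A i j * x j)"

definition graph_connected :: "('n \<Rightarrow> 'n \<Rightarrow> real) \<Rightarrow> bool" where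
  "graph_connected A \<longleftrightarrow> (\<forall>i j. (i, j) \<in> {(a, b). A a b > 0}\<^sup>*)"

definition Ave :: "('n::finite \<Rightarrow> real) \<Rightarrow> real" where
  "Ave x = (\<Sum>i\<in>UNIV. x i) / real CARD('n)"

definition laplace_density :: "real \<Rightarrow> real \<Rightarrow> real" where
  "laplace_density b x = exp (- \<bar>x\<bar> / b) / (2 * b)"

text \<open>The iteration theta(k+1) = theta(k) - h L x(k) + S eta(k), x(k) = theta(k) + eta(k),
  for a given (realised) noise sequence eta i k.\<close>
fun theta :: "('n::finite \<Rightarrow> 'n \<Rightarrow> real) \<Rightarrow> real \<Rightarrow> ('n \<Rightarrow> real) \<Rightarrow> ('n \<Rightarrow> real)
    \<Rightarrow> ('n \<Rightarrow> nat \<Rightarrow> real) \<Rightarrow> nat \<Rightarrow> 'n \<Rightarrow> real" where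
  "theta A h s theta0 eta 0 = theta0"
| "theta A h s theta0 eta (Suc k) =
     (\<lambda>i. theta A h s theta0 eta k i
          - h * laplacian_mult A (\<lambda>j. theta A h s theta0 eta k j + eta j k) i
          + s i * eta i k)"

end

theory Submission
  imports Defs
begin

text \<open>
  Because the Laplacian has zero column sums, the average moves only by the injected noise:
  \<open>Ave (\<theta> k) = Ave \<theta>0 + (\<Sum>i. s i / n * (\<Sum>j<k. \<eta> i j))\<close>. So the squared error splits into the
  disagreement \<open>\<Sum>i. (\<theta> k i - Ave (\<theta> k))\<^sup>2\<close> and \<open>n * (Ave (\<theta> k) - \<theta>inf)\<^sup>2\<close>, and the latter only
  involves the noise tails \<open>\<Sum>j. \<eta> i (j + k)\<close>.

  On a connected graph, a discrete Poincar\'e inequality together with \<open>h * dmax A < 1\<close> makes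
  \<open>x \<mapsto> x - h L x\<close> contract the disagreement by a factor \<open>\<rho> < 1\<close>; hence the mean disagreement obeys
  a linear recursion driven by the noise energy \<open>\<Sum>i. 2 (c i * q i ^ k)\<^sup>2 \<longlonglongrightarrow> 0\<close>. Cauchy--Schwarz
  against the weights \<open>q i ^ j\<close> bounds the squared tail by
  \<open>q i ^ k / (1 - q i) * (\<Sum>j. \<eta> i (j + k)\<^sup>2 / q i ^ (j + k))\<close>, whose mean is \<open>O(q i ^ k)\<close>.
\<close>

definition dirichlet_energy :: "('n::finite \<Rightarrow> 'n \<Rightarrow> real) \<Rightarrow> ('n \<Rightarrow> real) \<Rightarrow> real" where
  "dirichlet_energy A x = (\<Sum>i\<in>UNIV. \<Sum>j\<in>UNIV. A i j * (x i - x j)\<^sup>2)"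

definition disagreement :: "('n::finite \<Rightarrow> real) \<Rightarrow> real" where
  "disagreement x = (\<Sum>i\<in>UNIV. (x i - Ave x)\<^sup>2)"

lemma dirichlet_energy_nonneg: "(\<And>i j. 0 \<le> A i j) \<Longrightarrow> 0 \<le> dirichlet_energy A x"
  unfolding dirichlet_energy_def by (intro sum_nonneg) simp

lemma disagreement_nonneg: "0 \<le> disagreement x"
  unfolding disagreement_def by (intro sum_nonneg) simp

lemma dirichlet_energy_add_const: "dirichlet_energy A (\<lambda>j. x j + c) = dirichlet_energy A x"
  by (simp add: dirichlet_energy_def)

lemma Ave_add: "Ave (\<lambda>i. x i + y i) = Ave x + Ave y"
  by (simp add: Ave_def sum.distrib add_divide_distrib)

lemma sum_eq_card_mult_Ave: "(\<Sum>i\<in>UNIV. x i) = real CARD('n) * Ave (x :: 'n::finite \<Rightarrow> real)"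
  by (simp add: Ave_def)

subsection \<open>The graph Laplacian\<close>

lemma laplacian_mult_eq_sum: "laplacian_mult A x i = (\<Sum>j\<in>UNIV. A i j * (x i - x j))"
  by (simp add: laplacian_mult_def wdeg_def sum_distrib_right sum_subtractf right_diff_distrib)

lemma laplacian_mult_add:
  "laplacian_mult A (\<lambda>j. x j + y j) i = laplacian_mult A x i + laplacian_mult A y i"
  by (simp add: laplacian_mult_def algebra_simps sum.distrib)

lemma laplacian_mult_add_const: "laplacian_mult A (\<lambda>j. x j + c) = laplacian_mult A x"
  by (rule ext) (simp add: laplacian_mult_eq_sum)

lemma sum_laplacian_mult:
  assumes sym: "\<And>i j. A i j = A j i"
  shows "(\<Sum>i\<in>UNIV. laplacian_mult A x i) = 0"
proof -
  have "(\<Sum>i\<in>UNIV. \<Sum>j\<in>UNIV. A i j * x j) = (\<Sum>j\<in>UNIV. \<Sum>i\<in>UNIV. A j i * x j)"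
    by (subst sum.swap) (simp add: sym)
  also have "\<dots> = (\<Sum>j\<in>UNIV. wdeg A j * x j)"
    by (simp add: wdeg_def sum_distrib_right)
  finally show ?thesis
    by (simp add: laplacian_mult_def sum_subtractf)
qed

lemma sum_mult_laplacian_mult:
  assumes sym: "\<And>i j. A i j = A j i"
  shows "(\<Sum>i\<in>UNIV. x i * laplacian_mult A x i) = dirichlet_energy A x / 2"
proof -
  have left: "(\<Sum>i\<in>UNIV. x i * laplacian_mult A x i)
      = (\<Sum>i\<in>UNIV. \<Sum>j\<in>UNIV. A i j * x i * (x i - x j))"
    by (simp add: laplacian_mult_eq_sum sum_distrib_left mult.assoc mult.left_commute)
  have swapped: "(\<Sum>i\<in>UNIV. \<Sum>j\<in>UNIV. A i j * x i * (x i - x j))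
      = (\<Sum>i\<in>UNIV. \<Sum>j\<in>UNIV. - (A i j * x j * (x i - x j)))"
    by (subst sum.swap) (simp add: sym algebra_simps)
  have "dirichlet_energy A x
      = (\<Sum>i\<in>UNIV. \<Sum>j\<in>UNIV. A i j * x i * (x i - x j) + - (A i j * x j * (x i - x j)))"
    unfolding dirichlet_energy_def
    by (intro sum.cong refl) (simp add: power2_eq_square algebra_simps)
  also have "\<dots> = 2 * (\<Sum>i\<in>UNIV. x i * laplacian_mult A x i)"
    by (simp only: sum.distrib left swapped[symmetric])
  finally show ?thesis by simp
qed

lemma Ave_sub_laplacian_mult:
  assumes sym: "\<And>i j. A i j = A j i"
  shows "Ave (\<lambda>i. x i - h * laplacian_mult A y i + w i) = Ave x + Ave w"
proof -
  have "(\<Sum>i\<in>UNIV. x i - h * laplacian_mult A y i + w i)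
      = (\<Sum>i\<in>UNIV. x i) - h * (\<Sum>i\<in>UNIV. laplacian_mult A y i) + (\<Sum>i\<in>UNIV. w i)"
    by (simp add: sum.distrib sum_subtractf sum_distrib_left)
  then show ?thesis
    using sum_laplacian_mult[of A y, OF sym] by (simp add: Ave_def add_divide_distrib diff_divide_distrib)
qed

lemma wdeg_le_dmax: "wdeg A i \<le> dmax A"
  unfolding dmax_def by (rule Max_ge) auto

lemma dmax_nonneg:
  assumes "\<And>i j. 0 \<le> A i j"
  shows "0 \<le> dmax A"
proof -
  have "0 \<le> wdeg A undefined" unfolding wdeg_def using assms by (simp add: sum_nonneg)
  then show ?thesis using wdeg_le_dmax order_trans by blast
qed

lemma weighted_Cauchy_Schwarz_ineq_sum:
  fixes a y :: "'j \<Rightarrow> real"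
  assumes "\<And>j. 0 \<le> a j"
  shows "(\<Sum>j\<in>I. a j * y j)\<^sup>2 \<le> (\<Sum>j\<in>I. a j) * (\<Sum>j\<in>I. a j * (y j)\<^sup>2)"
proof -
  have "(\<Sum>j\<in>I. sqrt (a j) * (sqrt (a j) * y j))\<^sup>2
      \<le> (\<Sum>j\<in>I. (sqrt (a j))\<^sup>2) * (\<Sum>j\<in>I. (sqrt (a j) * y j)\<^sup>2)"
    by (rule Cauchy_Schwarz_ineq_sum)
  moreover have "sqrt (a j) * (sqrt (a j) * y j) = a j * y j" for j
    using assms[of j] by (simp add: mult.assoc[symmetric])
  moreover have "(sqrt (a j) * y j)\<^sup>2 = a j * (y j)\<^sup>2" for j
    using assms[of j] by (simp add: power_mult_distrib)
  ultimately show ?thesis using assms by simp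
qed

lemma square_sum_le_card_mult:
  "(\<Sum>i\<in>(UNIV::'n::finite set). y i)\<^sup>2 \<le> real CARD('n) * (\<Sum>i\<in>UNIV. (y i)\<^sup>2)"
  using weighted_Cauchy_Schwarz_ineq_sum[of "\<lambda>_. 1" y UNIV] by simp

lemma sum_square_laplacian_mult_le:
  assumes nonneg: "\<And>i j. 0 \<le> A i j"
  shows "(\<Sum>i\<in>UNIV. (laplacian_mult A x i)\<^sup>2) \<le> dmax A * dirichlet_energy A x"
proof -
  have "(laplacian_mult A x i)\<^sup>2 \<le> dmax A * (\<Sum>j\<in>UNIV. A i j * (x i - x j)\<^sup>2)" for i
  proof -
    have "(laplacian_mult A x i)\<^sup>2 \<le> wdeg A i * (\<Sum>j\<in>UNIV. A i j * (x i - x j)\<^sup>2)"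
      unfolding laplacian_mult_eq_sum wdeg_def
      by (rule weighted_Cauchy_Schwarz_ineq_sum) (simp add: nonneg)
    also have "\<dots> \<le> dmax A * (\<Sum>j\<in>UNIV. A i j * (x i - x j)\<^sup>2)"
      by (intro mult_right_mono wdeg_le_dmax sum_nonneg) (simp add: nonneg)
    finally show ?thesis .
  qed
  then show ?thesis
    unfolding dirichlet_energy_def sum_distrib_left by (intro sum_mono) auto
qed

lemma square_add_le: "((a::real) + b)\<^sup>2 \<le> 2 * a\<^sup>2 + 2 * b\<^sup>2"
proof -
  have "0 \<le> (a - b)\<^sup>2" by simp
  then show ?thesis unfolding power2_diff power2_sum by linarith
qed

lemma square_add_le_eps:
  assumes "0 < (\<epsilon>::real)"
  shows "(a + b)\<^sup>2 \<le> (1 + \<epsilon>) * a\<^sup>2 + (1 + 1 / \<epsilon>) * b\<^sup>2"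
proof -
  have "0 \<le> (sqrt \<epsilon> * a - b / sqrt \<epsilon>)\<^sup>2" by simp
  also have "\<dots> = \<epsilon> * a\<^sup>2 - 2 * a * b + b\<^sup>2 / \<epsilon>"
    using assms by (simp add: power2_diff power_mult_distrib power_divide)
  finally show ?thesis by (simp add: power2_sum algebra_simps add_divide_distrib)
qed

lemma dirichlet_energy_le:
  assumes sym: "\<And>i j. A i j = A j i" and nonneg: "\<And>i j. 0 \<le> A i j"
  shows "dirichlet_energy A x \<le> 4 * dmax A * (\<Sum>i\<in>UNIV. (x i)\<^sup>2)"
proof -
  have "dirichlet_energy A x
      \<le> (\<Sum>i\<in>UNIV. \<Sum>j\<in>UNIV. A i j * (2 * (x i)\<^sup>2) + A i j * (2 * (x j)\<^sup>2))"
    unfolding dirichlet_energy_def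
  proof (intro sum_mono)
    fix i j
    have "A i j * (x i - x j)\<^sup>2 \<le> A i j * (2 * (x i)\<^sup>2 + 2 * (x j)\<^sup>2)"
      using square_add_le[of "x i" "- x j"] by (intro mult_left_mono nonneg) simp
    then show "A i j * (x i - x j)\<^sup>2 \<le> A i j * (2 * (x i)\<^sup>2) + A i j * (2 * (x j)\<^sup>2)"
      by (simp only: distrib_left)
  qed
  also have "\<dots> = (\<Sum>i\<in>UNIV. \<Sum>j\<in>UNIV. A i j * (2 * (x i)\<^sup>2))
      + (\<Sum>j\<in>UNIV. \<Sum>i\<in>UNIV. A j i * (2 * (x j)\<^sup>2))"
    by (simp only: sum.distrib) (subst (2) sum.swap, simp add: sym)
  also have "\<dots> = 2 * (\<Sum>i\<in>UNIV. wdeg A i * (2 * (x i)\<^sup>2))"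
    by (simp add: wdeg_def sum_distrib_right)
  also have "\<dots> \<le> 2 * (\<Sum>i\<in>UNIV. dmax A * (2 * (x i)\<^sup>2))"
    by (intro mult_left_mono sum_mono mult_right_mono wdeg_le_dmax) auto
  finally show ?thesis by (simp add: sum_distrib_left mult.assoc)
qed

lemma sum_square_dev_eq:
  fixes x :: "'n::finite \<Rightarrow> real"
  shows "(\<Sum>i\<in>UNIV. (x i - c)\<^sup>2) = disagreement x + real CARD('n) * (Ave x - c)\<^sup>2"
proof -
  have "(\<Sum>i\<in>UNIV. (x i - c)\<^sup>2) = (\<Sum>i\<in>UNIV. (x i - Ave x)\<^sup>2 + 2 * (Ave x - c) * x i
      + ((Ave x - c)\<^sup>2 - 2 * (Ave x - c) * Ave x))"
    by (intro sum.cong refl) (simp add: power2_eq_square algebra_simps)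
  also have "\<dots> = disagreement x + 2 * (Ave x - c) * (\<Sum>i\<in>UNIV. x i)
      + real CARD('n) * ((Ave x - c)\<^sup>2 - 2 * (Ave x - c) * Ave x)"
    by (simp add: sum.distrib sum_distrib_left disagreement_def)
  also have "\<dots> = disagreement x + real CARD('n) * (Ave x - c)\<^sup>2"
    unfolding sum_eq_card_mult_Ave by (simp add: algebra_simps)
  finally show ?thesis .
qed

lemma disagreement_le_sum_square:
  fixes x :: "'n::finite \<Rightarrow> real"
  shows "disagreement x \<le> (\<Sum>i\<in>UNIV. (x i)\<^sup>2)"
  using sum_square_dev_eq[of x 0] by simp

lemma disagreement_add:
  assumes "0 < \<epsilon>"
  shows "disagreement (\<lambda>i. x i + y i) \<le> (1 + \<epsilon>) * disagreement x + (1 + 1 / \<epsilon>) * disagreement y"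
proof -
  have "disagreement (\<lambda>i. x i + y i) = (\<Sum>i\<in>UNIV. ((x i - Ave x) + (y i - Ave y))\<^sup>2)"
    unfolding disagreement_def Ave_add by (simp add: algebra_simps)
  also have "\<dots> \<le> (\<Sum>i\<in>UNIV. (1 + \<epsilon>) * (x i - Ave x)\<^sup>2 + (1 + 1 / \<epsilon>) * (y i - Ave y)\<^sup>2)"
    by (intro sum_mono square_add_le_eps assms)
  also have "\<dots> = (1 + \<epsilon>) * disagreement x + (1 + 1 / \<epsilon>) * disagreement y"
    by (simp add: disagreement_def sum.distrib sum_distrib_left)
  finally show ?thesis .
qed

subsection \<open>Contraction of the disagreement on a connected graph\<close>

lemma dirichlet_energy_ge_term:
  assumes nonneg: "\<And>i j. 0 \<le> A i j"
  shows "A i j * (x i - x j)\<^sup>2 \<le> dirichlet_energy A x"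
proof -
  have "A i j * (x i - x j)\<^sup>2 \<le> (\<Sum>j\<in>UNIV. A i j * (x i - x j)\<^sup>2)"
    by (rule member_le_sum) (auto simp: nonneg)
  also have "\<dots> \<le> dirichlet_energy A x"
    unfolding dirichlet_energy_def
    by (rule member_le_sum[where f = "\<lambda>i. \<Sum>j\<in>UNIV. A i j * (x i - x j)\<^sup>2"])
      (auto simp: nonneg intro!: sum_nonneg)
  finally show ?thesis .
qed

lemma square_diff_le_dirichlet_energy_of_path:
  fixes A :: "'n::finite \<Rightarrow> 'n \<Rightarrow> real"
  assumes nonneg: "\<And>i j. 0 \<le> A i j"
    and path: "(i, j) \<in> {(a, b). A a b > 0}\<^sup>*"
  shows "\<exists>C\<ge>0. \<forall>x. (x i - x j)\<^sup>2 \<le> C * dirichlet_energy A x"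
  using path
proof (induction rule: rtrancl_induct)
  case base
  show ?case by (rule exI[of _ 0]) simp
next
  case (step y z)
  then obtain C where C: "C \<ge> 0" "\<And>x. (x i - x y)\<^sup>2 \<le> C * dirichlet_energy A x" by blast
  have edge: "A y z > 0" using step by simp
  have "(x i - x z)\<^sup>2 \<le> (2 * C + 2 / A y z) * dirichlet_energy A x" for x
  proof -
    have "(x y - x z)\<^sup>2 \<le> dirichlet_energy A x / A y z"
      using dirichlet_energy_ge_term[of A, OF nonneg, of y z x] edge by (simp add: field_simps)
    moreover have "(x i - x z)\<^sup>2 \<le> 2 * (x i - x y)\<^sup>2 + 2 * (x y - x z)\<^sup>2"
      using square_add_le[of "x i - x y" "x y - x z"] by simp
    ultimately show ?thesis using C(2)[of x] by (simp add: algebra_simps)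
  qed
  then show ?case using C edge by (intro exI[of _ "2 * C + 2 / A y z"]) auto
qed

lemma disagreement_le_dirichlet_energy:
  fixes A :: "'n::finite \<Rightarrow> 'n \<Rightarrow> real"
  assumes nonneg: "\<And>i j. 0 \<le> A i j" and conn: "graph_connected A"
  shows "\<exists>K>0. \<forall>x. disagreement x \<le> K * dirichlet_energy A x"
proof -
  have "\<forall>i j. \<exists>C\<ge>0. \<forall>x. (x i - x j)\<^sup>2 \<le> C * dirichlet_energy A x"
    using square_diff_le_dirichlet_energy_of_path[of A, OF nonneg] conn
    by (auto simp: graph_connected_def)
  then obtain C where C: "\<And>i j. C i j \<ge> 0" "\<And>i j x. (x i - x j)\<^sup>2 \<le> C i j * dirichlet_energy A x"
    by metis
  define K where "K = (\<Sum>i\<in>UNIV. \<Sum>j\<in>UNIV. C i j) + 1"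
  have "disagreement x \<le> K * dirichlet_energy A x" for x
  proof -
    have "(x i - Ave x)\<^sup>2 \<le> (\<Sum>j\<in>UNIV. (x i - x j)\<^sup>2)" for i
    proof -
      have "x i - Ave x = (\<Sum>j\<in>UNIV. x i - x j) / real CARD('n)"
        by (simp add: Ave_def sum_subtractf field_simps)
      then have "(x i - Ave x)\<^sup>2 = (\<Sum>j\<in>UNIV. x i - x j)\<^sup>2 / (real CARD('n))\<^sup>2"
        by (simp add: power_divide)
      also have "\<dots> \<le> (\<Sum>j\<in>UNIV. (x i - x j)\<^sup>2) / real CARD('n)"
        using square_sum_le_card_mult[of "\<lambda>j. x i - x j"]
        by (simp add: power2_eq_square divide_le_eq mult.commute)
      also have "\<dots> \<le> (\<Sum>j\<in>UNIV. (x i - x j)\<^sup>2)"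
        using sum_nonneg[of UNIV "\<lambda>j. (x i - x j)\<^sup>2"]
        by (simp add: divide_le_eq mult_le_cancel_left1 Suc_leI)
      finally show ?thesis .
    qed
    then have "disagreement x \<le> (\<Sum>i\<in>UNIV. \<Sum>j\<in>UNIV. (x i - x j)\<^sup>2)"
      unfolding disagreement_def by (rule sum_mono)
    also have "\<dots> \<le> (\<Sum>i\<in>UNIV. \<Sum>j\<in>UNIV. C i j) * dirichlet_energy A x"
      unfolding sum_distrib_right using C(2) by (intro sum_mono) auto
    also have "\<dots> \<le> K * dirichlet_energy A x"
      unfolding K_def using dirichlet_energy_nonneg[of A, OF nonneg] by (intro mult_right_mono) auto
    finally show ?thesis .
  qed
  moreover have "K > 0" using C(1) by (simp add: K_def sum_nonneg add_nonneg_pos)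
  ultimately show ?thesis by blast
qed

lemma disagreement_laplacian_step_contracts:
  fixes A :: "'n::finite \<Rightarrow> 'n \<Rightarrow> real"
  assumes sym: "\<And>i j. A i j = A j i" and nonneg: "\<And>i j. 0 \<le> A i j"
    and conn: "graph_connected A" and h_pos: "0 < h" and h_lt: "h * dmax A < 1"
  shows "\<exists>\<rho>. 0 \<le> \<rho> \<and> \<rho> < 1 \<and>
    (\<forall>x. disagreement (\<lambda>i. x i - h * laplacian_mult A x i) \<le> \<rho> * disagreement x)"
proof -
  obtain K where K: "K > 0" "\<And>x. disagreement x \<le> K * dirichlet_energy A x"
    using disagreement_le_dirichlet_energy[OF nonneg conn] by blast
  define \<kappa> where "\<kappa> = h * (1 - h * dmax A)"
  have \<kappa>: "0 < \<kappa>" using h_pos h_lt by (simp add: \<kappa>_def)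
  define \<rho> where "\<rho> = max 0 (1 - \<kappa> / K)"
  have "disagreement (\<lambda>i. x i - h * laplacian_mult A x i) \<le> \<rho> * disagreement x" for x
  proof -
    define y where "y j = x j + - Ave x" for j
    have Ly: "laplacian_mult A y = laplacian_mult A x"
      unfolding y_def by (rule laplacian_mult_add_const)
    have Gy: "dirichlet_energy A y = dirichlet_energy A x"
      unfolding y_def by (rule dirichlet_energy_add_const)
    have Ave_step: "Ave (\<lambda>i. x i - h * laplacian_mult A x i) = Ave x"
      using Ave_sub_laplacian_mult[of A x h x "\<lambda>_. 0", OF sym] by (simp add: Ave_def)
    have "disagreement (\<lambda>i. x i - h * laplacian_mult A x i)
        = (\<Sum>i\<in>UNIV. (y i - h * laplacian_mult A y i)\<^sup>2)"
      unfolding disagreement_def Ave_step Ly by (simp add: y_def algebra_simps)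
    also have "\<dots> = (\<Sum>i\<in>UNIV. (y i)\<^sup>2) - 2 * h * (\<Sum>i\<in>UNIV. y i * laplacian_mult A y i)
        + h\<^sup>2 * (\<Sum>i\<in>UNIV. (laplacian_mult A y i)\<^sup>2)"
      by (simp add: power2_diff sum.distrib sum_subtractf sum_distrib_left power_mult_distrib
          algebra_simps)
    also have "\<dots> = disagreement x - h * dirichlet_energy A x
        + h\<^sup>2 * (\<Sum>i\<in>UNIV. (laplacian_mult A x i)\<^sup>2)"
      using sum_mult_laplacian_mult[of A y, OF sym]
      by (simp add: disagreement_def y_def Gy Ly)
    also have "\<dots> \<le> disagreement x - \<kappa> * dirichlet_energy A x"
      using sum_square_laplacian_mult_le[of A, OF nonneg, of x] h_pos
      by (simp add: \<kappa>_def power2_eq_square algebra_simps)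
    also have "\<dots> \<le> disagreement x - \<kappa> * (disagreement x / K)"
      using K \<kappa> by (simp add: pos_divide_le_eq mult.commute)
    also have "\<dots> = (1 - \<kappa> / K) * disagreement x"
      by (simp add: algebra_simps)
    also have "\<dots> \<le> \<rho> * disagreement x"
      unfolding \<rho>_def by (intro mult_right_mono disagreement_nonneg) auto
    finally show ?thesis .
  qed
  moreover have "0 \<le> \<rho>" "\<rho> < 1" using \<kappa> K by (auto simp: \<rho>_def)
  ultimately show ?thesis by blast
qed

lemma theta_Suc_split:
  "theta A h s t0 e (Suc k) =
     (\<lambda>i. (theta A h s t0 e k i - h * laplacian_mult A (theta A h s t0 e k) i)
        + (s i * e i k - h * laplacian_mult A (\<lambda>j. e j k) i))"
  by (rule ext) (simp add: laplacian_mult_add algebra_simps)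

lemma Ave_theta:
  fixes A :: "'n::finite \<Rightarrow> 'n \<Rightarrow> real"
  assumes sym: "\<And>i j. A i j = A j i"
  shows "Ave (theta A h s t0 e k) = Ave t0 + (\<Sum>i\<in>UNIV. s i / real CARD('n) * (\<Sum>j<k. e i j))"
proof (induction k)
  case 0
  then show ?case by simp
next
  case (Suc k)
  have "Ave (theta A h s t0 e (Suc k)) = Ave (theta A h s t0 e k) + Ave (\<lambda>i. s i * e i k)"
    using Ave_sub_laplacian_mult[of A "theta A h s t0 e k" h "\<lambda>j. theta A h s t0 e k j + e j k"
        "\<lambda>i. s i * e i k", OF sym]
    by simp
  also have "\<dots> = Ave t0 + (\<Sum>i\<in>UNIV. s i / real CARD('n) * ((\<Sum>j<k. e i j) + e i k))"
    unfolding Suc.IH by (simp add: Ave_def sum_divide_distrib distrib_left sum.distrib)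
  finally show ?case by simp
qed

lemma disagreement_noise_input_le:
  fixes A :: "'n::finite \<Rightarrow> 'n \<Rightarrow> real"
  assumes sym: "\<And>i j. A i j = A j i" and nonneg: "\<And>i j. 0 \<le> A i j"
    and s_bound: "\<And>i. \<bar>s i\<bar> \<le> 2"
  shows "disagreement (\<lambda>i. s i * x i - h * laplacian_mult A x i)
    \<le> (8 + 8 * h\<^sup>2 * (dmax A)\<^sup>2) * (\<Sum>i\<in>UNIV. (x i)\<^sup>2)"
proof -
  have "disagreement (\<lambda>i. s i * x i - h * laplacian_mult A x i)
      \<le> (\<Sum>i\<in>UNIV. (s i * x i + - h * laplacian_mult A x i)\<^sup>2)"
    using disagreement_le_sum_square[of "\<lambda>i. s i * x i - h * laplacian_mult A x i"] by simp
  also have "\<dots> \<le> (\<Sum>i\<in>UNIV. 2 * (s i * x i)\<^sup>2 + 2 * (- h * laplacian_mult A x i)\<^sup>2)"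
    by (intro sum_mono square_add_le)
  also have "\<dots> = (\<Sum>i\<in>UNIV. 2 * (s i)\<^sup>2 * (x i)\<^sup>2) + 2 * h\<^sup>2 * (\<Sum>i\<in>UNIV. (laplacian_mult A x i)\<^sup>2)"
    by (simp add: sum.distrib sum_distrib_left power_mult_distrib algebra_simps)
  also have "\<dots> \<le> (\<Sum>i\<in>UNIV. 8 * (x i)\<^sup>2) + 2 * h\<^sup>2 * (dmax A * (4 * dmax A * (\<Sum>i\<in>UNIV. (x i)\<^sup>2)))"
  proof (intro add_mono mult_left_mono sum_mono)
    fix i
    have "(s i)\<^sup>2 \<le> 2\<^sup>2" using power_mono[OF s_bound[of i] abs_ge_zero, of 2] by simp
    then show "2 * (s i)\<^sup>2 * (x i)\<^sup>2 \<le> 8 * (x i)\<^sup>2" by (intro mult_right_mono) auto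
  next
    show "(\<Sum>i\<in>UNIV. (laplacian_mult A x i)\<^sup>2) \<le> dmax A * (4 * dmax A * (\<Sum>i\<in>UNIV. (x i)\<^sup>2))"
      using sum_square_laplacian_mult_le[of A, OF nonneg] dirichlet_energy_le[of A, OF sym nonneg]
        mult_left_mono[OF _ dmax_nonneg[of A, OF nonneg]] order_trans
      by blast
  qed auto
  finally show ?thesis by (simp add: sum_distrib_left power2_eq_square algebra_simps)
qed

lemma disagreement_theta_Suc_le:
  fixes A :: "'n::finite \<Rightarrow> 'n \<Rightarrow> real"
  assumes sym: "\<And>i j. A i j = A j i" and nonneg: "\<And>i j. 0 \<le> A i j"
    and conn: "graph_connected A" and h_pos: "0 < h" and h_lt: "h * dmax A < 1"
    and s_bound: "\<And>i. \<bar>s i\<bar> \<le> 2"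
  shows "\<exists>\<rho> D. 0 \<le> \<rho> \<and> \<rho> < 1 \<and> 0 \<le> D \<and> (\<forall>t0 e k.
    disagreement (theta A h s t0 e (Suc k))
      \<le> \<rho> * disagreement (theta A h s t0 e k) + D * (\<Sum>i\<in>UNIV. (e i k)\<^sup>2))"
proof -
  obtain \<rho> where \<rho>: "0 \<le> \<rho>" "\<rho> < 1"
    "\<And>x. disagreement (\<lambda>i. x i - h * laplacian_mult A x i) \<le> \<rho> * disagreement x"
    using disagreement_laplacian_step_contracts[OF sym nonneg conn h_pos h_lt] by blast
  define \<epsilon> where "\<epsilon> = (1 - \<rho>) / 2"
  have \<epsilon>: "0 < \<epsilon>" using \<rho> by (simp add: \<epsilon>_def)
  define D where "D = (1 + 1 / \<epsilon>) * (8 + 8 * h\<^sup>2 * (dmax A)\<^sup>2)"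
  have "disagreement (theta A h s t0 e (Suc k))
      \<le> ((1 + \<epsilon>) * \<rho>) * disagreement (theta A h s t0 e k) + D * (\<Sum>i\<in>UNIV. (e i k)\<^sup>2)" for t0 e k
  proof -
    let ?x = "theta A h s t0 e k"
    have "disagreement (theta A h s t0 e (Suc k))
        \<le> (1 + \<epsilon>) * disagreement (\<lambda>i. ?x i - h * laplacian_mult A ?x i)
          + (1 + 1 / \<epsilon>) * disagreement (\<lambda>i. s i * e i k - h * laplacian_mult A (\<lambda>j. e j k) i)"
      unfolding theta_Suc_split by (rule disagreement_add[OF \<epsilon>])
    also have "\<dots> \<le> (1 + \<epsilon>) * (\<rho> * disagreement ?x)
        + (1 + 1 / \<epsilon>) * ((8 + 8 * h\<^sup>2 * (dmax A)\<^sup>2) * (\<Sum>i\<in>UNIV. (e i k)\<^sup>2))"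
      using \<epsilon> by (intro add_mono mult_left_mono \<rho>(3) disagreement_noise_input_le sym nonneg s_bound) auto
    finally show ?thesis by (simp add: D_def)
  qed
  moreover have "(1 + \<epsilon>) * \<rho> < 1"
  proof -
    have "0 < (1 - \<rho>) * (2 - \<rho>)" using \<rho> by simp
    then show ?thesis by (simp add: \<epsilon>_def field_simps algebra_simps)
  qed
  moreover have "0 \<le> D" using \<epsilon> by (simp add: D_def)
  ultimately show ?thesis using \<epsilon> \<rho> by (intro exI[of _ "(1 + \<epsilon>) * \<rho>"] exI[of _ D]) auto
qed

lemma theta_measurable[measurable]:
  assumes "\<And>i j. (\<lambda>\<omega>. e i j \<omega>) \<in> borel_measurable M"
  shows "(\<lambda>\<omega>. theta A h s t0 (\<lambda>i j. e i j \<omega>) k i) \<in> borel_measurable M"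
proof (induction k arbitrary: i)
  case 0
  then show ?case by simp
next
  case (Suc k)
  then show ?case using assms by (simp add: laplacian_mult_def) measurable
qed

lemma disagreement_theta_measurable[measurable]:
  assumes "\<And>i j. (\<lambda>\<omega>. e i j \<omega>) \<in> borel_measurable M"
  shows "(\<lambda>\<omega>. disagreement (theta A h s t0 (\<lambda>i j. e i j \<omega>) k)) \<in> borel_measurable M"
  using assms unfolding disagreement_def Ave_def by measurable

subsection \<open>Series estimates\<close>

lemma linear_recursion_tendsto_zero:
  fixes \<beta> b :: "nat \<Rightarrow> real"
  assumes \<rho>: "0 \<le> \<rho>" "\<rho> < 1" and nonneg: "\<And>k. 0 \<le> \<beta> k"
    and rec: "\<And>k. \<beta> (Suc k) \<le> \<rho> * \<beta> k + b k" and b: "b \<longlonglongrightarrow> 0"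
  shows "\<beta> \<longlonglongrightarrow> 0"
proof (rule LIMSEQ_I)
  fix r :: real
  assume r: "0 < r"
  have "0 < r * (1 - \<rho>) / 2" using r \<rho> by simp
  from LIMSEQ_D[OF b this] obtain N where N: "\<And>k. k \<ge> N \<Longrightarrow> norm (b k - 0) < r * (1 - \<rho>) / 2"
    by blast
  have after_N: "\<beta> (N + j) \<le> \<rho> ^ j * \<beta> N + r / 2" for j
  proof (induction j)
    case 0
    then show ?case using r by simp
  next
    case (Suc j)
    have "\<rho> * \<beta> (N + j) \<le> \<rho> * (\<rho> ^ j * \<beta> N + r / 2)"
      using Suc.IH \<rho>(1) by (rule mult_left_mono)
    then have "\<beta> (N + Suc j) \<le> \<rho> * (\<rho> ^ j * \<beta> N + r / 2) + r * (1 - \<rho>) / 2"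
      using rec[of "N + j"] N[of "N + j"] abs_ge_self[of "b (N + j)"] by simp
    also have "\<dots> = \<rho> ^ Suc j * \<beta> N + r / 2" by (simp add: field_simps)
    finally show ?case .
  qed
  have "(\<lambda>j. \<rho> ^ j * \<beta> N) \<longlonglongrightarrow> 0"
    using tendsto_mult_left_zero[OF LIMSEQ_power_zero, of \<rho> "\<beta> N"] \<rho> by simp
  from LIMSEQ_D[OF this, of "r / 2"] r obtain M
    where M: "\<And>j. j \<ge> M \<Longrightarrow> norm (\<rho> ^ j * \<beta> N - 0) < r / 2"
    by auto
  show "\<exists>no. \<forall>n\<ge>no. norm (\<beta> n - 0) < r"
  proof (intro exI allI impI)
    fix n
    assume n: "N + M \<le> n"
    then have "\<beta> n \<le> \<rho> ^ (n - N) * \<beta> N + r / 2"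
      using after_N[of "n - N"] by simp
    moreover have "\<rho> ^ (n - N) * \<beta> N < r / 2"
      using M[of "n - N"] n abs_ge_self[of "\<rho> ^ (n - N) * \<beta> N"] by (simp add: le_diff_conv2)
    ultimately show "norm (\<beta> n - 0) < r" using nonneg[of n] by simp
  qed
qed

lemma summable_square_suminf_le:
  fixes a w :: "nat \<Rightarrow> real"
  assumes w: "\<And>j. 0 < w j" and sw: "summable w" and sa: "summable (\<lambda>j. (a j)\<^sup>2 / w j)"
  shows "summable a \<and> (\<Sum>j. a j)\<^sup>2 \<le> (\<Sum>j. w j) * (\<Sum>j. (a j)\<^sup>2 / w j)"
proof -
  have le: "norm (a j) \<le> (w j + (a j)\<^sup>2 / w j) / 2" for j
  proof -
    have "0 \<le> (\<bar>a j\<bar> - w j)\<^sup>2" by simp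
    then show ?thesis using w[of j] by (simp add: power2_diff field_simps power2_eq_square)
  qed
  have "summable (\<lambda>j. (w j + (a j)\<^sup>2 / w j) / 2)"
    by (intro summable_divide summable_add sw sa)
  then have "summable (\<lambda>j. norm (a j))"
    by (rule summable_comparison_test[rotated]) (use le in auto)
  then have summable_a: "summable a"
    by (rule summable_norm_cancel)
  have partial: "(\<Sum>j<n. a j)\<^sup>2 \<le> (\<Sum>j. w j) * (\<Sum>j. (a j)\<^sup>2 / w j)" for n
  proof -
    have "(\<Sum>j<n. a j)\<^sup>2 = (\<Sum>j<n. w j * (a j / w j))\<^sup>2"
      using w by (simp add: less_imp_neq[THEN not_sym])
    also have "\<dots> \<le> (\<Sum>j<n. w j) * (\<Sum>j<n. w j * (a j / w j)\<^sup>2)"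
      by (rule weighted_Cauchy_Schwarz_ineq_sum) (use w in \<open>simp add: less_imp_le\<close>)
    also have "(\<Sum>j<n. w j * (a j / w j)\<^sup>2) = (\<Sum>j<n. (a j)\<^sup>2 / w j)"
      using w by (intro sum.cong refl) (simp add: power2_eq_square less_imp_neq[THEN not_sym])
    also have "(\<Sum>j<n. w j) * (\<Sum>j<n. (a j)\<^sup>2 / w j) \<le> (\<Sum>j. w j) * (\<Sum>j. (a j)\<^sup>2 / w j)"
      using w by (intro mult_mono sum_le_suminf sw sa sum_nonneg suminf_nonneg) (auto simp: less_imp_le)
    finally show ?thesis .
  qed
  have "(\<lambda>n. (\<Sum>j<n. a j)\<^sup>2) \<longlonglongrightarrow> (\<Sum>j. a j)\<^sup>2"
    by (intro tendsto_power summable_LIMSEQ summable_a)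
  then have "(\<Sum>j. a j)\<^sup>2 \<le> (\<Sum>j. w j) * (\<Sum>j. (a j)\<^sup>2 / w j)"
    by (rule LIMSEQ_le_const2) (use partial in auto)
  with summable_a show ?thesis by simp
qed

lemma square_tail_suminf_le:
  fixes e :: "nat \<Rightarrow> real"
  assumes q: "0 < q" "q < 1" and summable: "summable (\<lambda>j. (e (j + k))\<^sup>2 / q ^ (j + k))"
  shows "summable e \<and> (\<Sum>j. e (j + k))\<^sup>2 \<le> q ^ k / (1 - q) * (\<Sum>j. (e (j + k))\<^sup>2 / q ^ (j + k))"
proof -
  have "(\<lambda>j. q ^ k * q ^ j) sums (q ^ k * (1 / (1 - q)))"
    by (intro sums_mult geometric_sums) (use q in auto)
  then have geo: "(\<lambda>j. q ^ (j + k)) sums (q ^ k / (1 - q))"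
    by (simp add: power_add mult.commute)
  show ?thesis
    using summable_square_suminf_le[of "\<lambda>j. q ^ (j + k)" "\<lambda>j. e (j + k)"] q summable
      sums_summable[OF geo] summable_iff_shift[of e k]
    by (simp add: sums_iff[THEN iffD1, OF geo])
qed

lemma consensus_error_le_real:
  fixes e :: "'n::finite \<Rightarrow> nat \<Rightarrow> real" and A :: "'n \<Rightarrow> 'n \<Rightarrow> real"
  assumes sym: "\<And>i j. A i j = A j i" and q: "\<And>i. 0 < q i \<and> q i < 1"
    and s_bound: "\<And>i. \<bar>s i\<bar> \<le> 2"
    and summable: "\<And>i. summable (\<lambda>j. (e i (j + k))\<^sup>2 / q i ^ (j + k))"
  shows "(\<Sum>i\<in>UNIV. (theta A h s t0 e k i - (Ave t0 + (\<Sum>i\<in>UNIV. s i / real CARD('n) * (\<Sum>j. e i j))))\<^sup>2)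
    \<le> disagreement (theta A h s t0 e k)
      + (\<Sum>i\<in>UNIV. 4 * q i ^ k / (1 - q i) * (\<Sum>j. (e i (j + k))\<^sup>2 / q i ^ (j + k)))"
proof -
  define n where "n = real CARD('n)"
  have n: "n \<ge> 1" by (simp add: n_def)
  define T where "T i = (\<Sum>j. e i (j + k))" for i
  have tail: "summable (e i) \<and> (T i)\<^sup>2 \<le> q i ^ k / (1 - q i) * (\<Sum>j. (e i (j + k))\<^sup>2 / q i ^ (j + k))"
    for i unfolding T_def using q[of i] summable[of i] by (intro square_tail_suminf_le) auto
  have "(\<Sum>j. e i j) = T i + (\<Sum>j<k. e i j)" for i
    unfolding T_def using suminf_split_initial_segment[of "e i" k] tail[of i] by simp
  then have "Ave (theta A h s t0 e k) - (Ave t0 + (\<Sum>i\<in>UNIV. s i / n * (\<Sum>j. e i j)))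
      = - (\<Sum>i\<in>UNIV. s i / n * T i)"
    unfolding Ave_theta[OF sym] n_def by (simp add: distrib_left sum.distrib)
  then have "(\<Sum>i\<in>UNIV. (theta A h s t0 e k i - (Ave t0 + (\<Sum>i\<in>UNIV. s i / n * (\<Sum>j. e i j))))\<^sup>2)
      = disagreement (theta A h s t0 e k) + n * (\<Sum>i\<in>UNIV. s i / n * T i)\<^sup>2"
    using sum_square_dev_eq[of "theta A h s t0 e k"] by (simp add: n_def)
  also have "n * (\<Sum>i\<in>UNIV. s i / n * T i)\<^sup>2 \<le> n * (n * (\<Sum>i\<in>UNIV. (s i / n * T i)\<^sup>2))"
    using square_sum_le_card_mult[of "\<lambda>i. s i / n * T i"] n unfolding n_def by simp
  also have "\<dots> = (\<Sum>i\<in>UNIV. (s i)\<^sup>2 * (T i)\<^sup>2)"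
    using n by (simp add: sum_distrib_left power_mult_distrib power_divide power2_eq_square mult_ac)
  also have "\<dots> \<le> (\<Sum>i\<in>UNIV. 4 * q i ^ k / (1 - q i) * (\<Sum>j. (e i (j + k))\<^sup>2 / q i ^ (j + k)))"
  proof (intro sum_mono)
    fix i
    have "(s i)\<^sup>2 \<le> 2\<^sup>2" using power_mono[OF s_bound[of i] abs_ge_zero, of 2] by simp
    then have "(s i)\<^sup>2 * (T i)\<^sup>2 \<le> 4 * (T i)\<^sup>2" by (intro mult_right_mono) auto
    then show "(s i)\<^sup>2 * (T i)\<^sup>2 \<le> 4 * q i ^ k / (1 - q i) * (\<Sum>j. (e i (j + k))\<^sup>2 / q i ^ (j + k))"
      using tail[of i] by simp
  qed
  finally show ?thesis by (simp add: n_def)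
qed

text \<open>In \<open>ennreal\<close> the bound also covers noise realisations whose weighted tails diverge.\<close>

lemma consensus_error_le:
  fixes e :: "'n::finite \<Rightarrow> nat \<Rightarrow> real" and A :: "'n \<Rightarrow> 'n \<Rightarrow> real"
  assumes sym: "\<And>i j. A i j = A j i" and q: "\<And>i. 0 < q i \<and> q i < 1"
    and s_bound: "\<And>i. \<bar>s i\<bar> \<le> 2"
  shows "ennreal (\<Sum>i\<in>UNIV. (theta A h s t0 e k i - (Ave t0 + (\<Sum>i\<in>UNIV. s i / real CARD('n) * (\<Sum>j. e i j))))\<^sup>2)
    \<le> ennreal (disagreement (theta A h s t0 e k))
      + (\<Sum>i\<in>UNIV. ennreal (4 * q i ^ k / (1 - q i)) * (\<Sum>j. ennreal ((e i (j + k))\<^sup>2 / q i ^ (j + k))))"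
    (is "_ \<le> ?rhs")
proof (cases "\<forall>i. (\<Sum>j. ennreal ((e i (j + k))\<^sup>2 / q i ^ (j + k))) \<noteq> top")
  case False
  define w where "w i = ennreal (4 * q i ^ k / (1 - q i)) * (\<Sum>j. ennreal ((e i (j + k))\<^sup>2 / q i ^ (j + k)))"
    for i
  from False obtain i where "(\<Sum>j. ennreal ((e i (j + k))\<^sup>2 / q i ^ (j + k))) = top" by blast
  moreover have "ennreal (4 * q i ^ k / (1 - q i)) \<noteq> 0" using q[of i] by simp
  ultimately have "w i = top" by (simp add: w_def ennreal_mult_eq_top_iff)
  moreover have "w i \<le> ?rhs"
    unfolding w_def[symmetric] by (rule order_trans[OF member_le_sum[of i UNIV w] add_increasing]) auto
  ultimately have "top \<le> ?rhs" by (simp only:)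
  then show ?thesis by (rule order_trans[OF top_greatest])
next
  case True
  have terms_nonneg: "0 \<le> (e i (j + k))\<^sup>2 / q i ^ (j + k)" for i j using q[of i] by simp
  have summable: "summable (\<lambda>j. (e i (j + k))\<^sup>2 / q i ^ (j + k))" for i
    by (rule summable_suminf_not_top) (use terms_nonneg True in auto)
  define tail where "tail i = 4 * q i ^ k / (1 - q i) * (\<Sum>j. (e i (j + k))\<^sup>2 / q i ^ (j + k))" for i
  have tail_nonneg: "0 \<le> tail i" for i
    unfolding tail_def using q[of i] terms_nonneg summable by (intro mult_nonneg_nonneg suminf_nonneg) auto
  have "ennreal (4 * q i ^ k / (1 - q i)) * (\<Sum>j. ennreal ((e i (j + k))\<^sup>2 / q i ^ (j + k)))
      = ennreal (tail i)" for i
    unfolding tail_def suminf_ennreal2[OF terms_nonneg summable] using q[of i] terms_nonneg summable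
    by (intro ennreal_mult[symmetric] suminf_nonneg) auto
  then have "?rhs = ennreal (disagreement (theta A h s t0 e k) + (\<Sum>i\<in>UNIV. tail i))"
    using tail_nonneg
    by (simp add: sum_ennreal) (intro ennreal_plus[symmetric] disagreement_nonneg sum_nonneg tail_nonneg)
  moreover have "(\<Sum>i\<in>UNIV. (theta A h s t0 e k i - (Ave t0 + (\<Sum>i\<in>UNIV. s i / real CARD('n) * (\<Sum>j. e i j))))\<^sup>2)
      \<le> disagreement (theta A h s t0 e k) + (\<Sum>i\<in>UNIV. tail i)"
    unfolding tail_def by (intro consensus_error_le_real sym q s_bound summable)
  ultimately show ?thesis by (simp add: ennreal_leI)
qed

subsection \<open>Mean-square convergence under Laplace noise\<close>

lemma integrable_and_integral_tendsto_zero: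
  fixes f :: "nat \<Rightarrow> 'a \<Rightarrow> real"
  assumes [measurable]: "\<And>k. f k \<in> borel_measurable M"
    and nonneg: "\<And>k x. 0 \<le> f k x"
    and bound: "\<And>k. (\<integral>\<^sup>+x. ennreal (f k x) \<partial>M) \<le> ennreal (b k)"
    and b: "b \<longlonglongrightarrow> 0"
  shows "(\<forall>k. integrable M (f k)) \<and> (\<lambda>k. integral\<^sup>L M (f k)) \<longlonglongrightarrow> 0"
proof
  show integrable: "\<forall>k. integrable M (f k)"
  proof
    fix k
    have "(\<integral>\<^sup>+x. ennreal (f k x) \<partial>M) < \<infinity>"
      using bound[of k] by (simp add: le_less_trans)
    then show "integrable M (f k)" using nonneg by (intro integrableI_nonneg) auto
  qed
  have upper: "integral\<^sup>L M (f k) \<le> max 0 (b k)" for k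
  proof -
    have "ennreal (integral\<^sup>L M (f k)) \<le> ennreal (b k)"
      using bound[of k] integrable nonneg by (simp add: nn_integral_eq_integral)
    then show ?thesis unfolding ennreal_le_iff2 by linarith
  qed
  have upper_tendsto: "(\<lambda>k. max 0 (b k)) \<longlonglongrightarrow> 0"
    using tendsto_max[OF tendsto_const b, of 0] by simp
  show "(\<lambda>k. integral\<^sup>L M (f k)) \<longlonglongrightarrow> 0"
    by (rule tendsto_sandwich[OF always_eventually always_eventually tendsto_const upper_tendsto])
      (use upper nonneg in \<open>auto intro: integral_nonneg\<close>)
qed

text \<open>Lap(b) is the symmetrisation of the exponential law with rate \<open>1 / b\<close>, i.e. of
  \<open>erlang_density 0\<close>.\<close>

lemma ennreal_half: "0 \<le> a \<Longrightarrow> ennreal (a / 2) = ennreal a / 2"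
  by (metis divide_ennreal ennreal_numeral zero_less_numeral)

lemma nn_integral_laplace_square:
  assumes distr: "distributed M lborel X (\<lambda>x. ennreal (laplace_density b x))" and b: "0 < b"
  shows "(\<integral>\<^sup>+\<omega>. ennreal ((X \<omega>)\<^sup>2) \<partial>M) = ennreal (2 * b\<^sup>2)"
proof -
  define l where "l = 1 / b"
  have l: "0 < l" using b by (simp add: l_def)
  define g where "g x = ennreal (erlang_density 0 l x * x\<^sup>2) / 2" for x
  have g_measurable: "g \<in> borel_measurable borel" unfolding g_def by measurable
  have split: "ennreal (laplace_density b x) * ennreal (x\<^sup>2) = g x + g (0 + (-1) * x)" for x
  proof -
    have "laplace_density b x * x\<^sup>2
        = erlang_density 0 l x * x\<^sup>2 / 2 + erlang_density 0 l (0 + (-1) * x) * (0 + (-1) * x)\<^sup>2 / 2"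
      using b by (auto simp: laplace_density_def erlang_density_def l_def abs_if field_simps)
    moreover have "0 \<le> laplace_density b x" using b by (simp add: laplace_density_def)
    moreover have "0 \<le> erlang_density 0 l y" for y using l by (simp add: erlang_density_def)
    ultimately show ?thesis by (simp add: g_def ennreal_mult[symmetric] ennreal_half)
  qed
  have "(\<integral>\<^sup>+\<omega>. ennreal ((X \<omega>)\<^sup>2) \<partial>M) = (\<integral>\<^sup>+x. ennreal (laplace_density b x) * ennreal (x\<^sup>2) \<partial>lborel)"
    by (rule distributed_nn_integral[OF distr, symmetric]) simp
  also have "\<dots> = (\<integral>\<^sup>+x. g x \<partial>lborel) + (\<integral>\<^sup>+x. g (0 + (-1) * x) \<partial>lborel)"
    unfolding split using g_measurable by (simp add: nn_integral_add)
  also have "(\<integral>\<^sup>+x. g (0 + (-1) * x) \<partial>lborel) = (\<integral>\<^sup>+x. g x \<partial>lborel)"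
    using nn_integral_real_affine[OF g_measurable, of "-1" 0] by simp
  also have "(\<integral>\<^sup>+x. g x \<partial>lborel) = (\<integral>\<^sup>+x. ennreal (erlang_density 0 l x * x ^ 2) \<partial>lborel) / 2"
    by (simp add: g_def divide_ennreal_def nn_integral_multc)
  also have "(\<integral>\<^sup>+x. ennreal (erlang_density 0 l x * x ^ 2) \<partial>lborel) = ennreal (2 / l\<^sup>2)"
    using nn_integral_erlang_ith_moment[OF l, of 0 2] by simp
  finally show ?thesis
    using b by (simp add: l_def power_divide ennreal_half[symmetric] ennreal_plus[symmetric] del: ennreal_plus)
qed

locale laplace_noise = prob_space M
  for M :: "'a measure" and c q :: "'n::finite \<Rightarrow> real" and \<eta> :: "'n \<Rightarrow> nat \<Rightarrow> 'a \<Rightarrow> real" +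
  assumes c_pos: "\<And>i. 0 < c i" and q_pos: "\<And>i. 0 < q i" and q_less_1: "\<And>i. q i < 1"
    and noise_distributed:
      "\<And>i k. distributed M lborel (\<eta> i k) (\<lambda>x. ennreal (laplace_density (c i * q i ^ k) x))"
begin

lemma noise_measurable[measurable]: "\<eta> i k \<in> borel_measurable M"
  using distributed_measurable[OF noise_distributed] by simp

lemma nn_integral_noise_square: "(\<integral>\<^sup>+\<omega>. ennreal ((\<eta> i k \<omega>)\<^sup>2) \<partial>M) = ennreal (2 * (c i * q i ^ k)\<^sup>2)"
  using c_pos q_pos by (intro nn_integral_laplace_square noise_distributed) simp

lemma nn_integral_sum_noise_square:
  "(\<integral>\<^sup>+\<omega>. ennreal (\<Sum>i\<in>UNIV. (\<eta> i k \<omega>)\<^sup>2) \<partial>M) = ennreal (\<Sum>i\<in>UNIV. 2 * (c i * q i ^ k)\<^sup>2)"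
  by (simp add: sum_ennreal[symmetric] nn_integral_sum nn_integral_noise_square del: sum_ennreal)

lemma noise_energy_tendsto_zero: "(\<lambda>k. \<Sum>i\<in>UNIV. 2 * (c i * q i ^ k)\<^sup>2) \<longlonglongrightarrow> 0"
proof -
  have "(\<lambda>k. 2 * (c i)\<^sup>2 * ((q i)\<^sup>2) ^ k) \<longlonglongrightarrow> 0" for i
    using q_pos[of i] q_less_1[of i]
    by (intro tendsto_mult_right_zero LIMSEQ_power_zero) (simp add: power_less_one_iff)
  then show ?thesis
    using tendsto_sum[of UNIV "\<lambda>i k. 2 * (c i)\<^sup>2 * ((q i)\<^sup>2) ^ k" "\<lambda>_. 0" sequentially]
    by (simp add: power_mult_distrib power_mult[symmetric] mult_ac)
qed

lemma nn_integral_contracting_process_tendsto_zero: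
  assumes \<rho>: "0 \<le> \<rho>" "\<rho> < 1" and D: "0 \<le> D"
    and [measurable]: "\<And>k. f k \<in> borel_measurable M"
    and nonneg: "\<And>k \<omega>. 0 \<le> f k \<omega>" and init: "\<And>\<omega>. f 0 \<omega> \<le> a"
    and step: "\<And>k \<omega>. f (Suc k) \<omega> \<le> \<rho> * f k \<omega> + D * (\<Sum>i\<in>UNIV. (\<eta> i k \<omega>)\<^sup>2)"
  shows "\<exists>\<beta>. (\<forall>k. 0 \<le> \<beta> k) \<and> \<beta> \<longlonglongrightarrow> 0 \<and>
    (\<forall>k. (\<integral>\<^sup>+\<omega>. ennreal (f k \<omega>) \<partial>M) \<le> ennreal (\<beta> k))"
proof -
  define E where "E k = (\<Sum>i\<in>UNIV. 2 * (c i * q i ^ k)\<^sup>2)" for k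
  define \<beta> where "\<beta> = rec_nat a (\<lambda>k b. \<rho> * b + D * E k)"
  have \<beta>_simps: "\<beta> 0 = a" "\<beta> (Suc k) = \<rho> * \<beta> k + D * E k" for k
    by (simp_all add: \<beta>_def)
  have E_nonneg: "0 \<le> E k" for k unfolding E_def by (intro sum_nonneg) simp
  have \<beta>_nonneg: "0 \<le> \<beta> k" for k
    using order_trans[OF nonneg init]
    by (induction k) (simp_all add: \<beta>_simps \<rho> D E_nonneg)
  have "\<beta> \<longlonglongrightarrow> 0"
    using \<rho> \<beta>_nonneg
  proof (rule linear_recursion_tendsto_zero)
    show "\<beta> (Suc k) \<le> \<rho> * \<beta> k + D * E k" for k by (simp add: \<beta>_simps)
    show "(\<lambda>k. D * E k) \<longlonglongrightarrow> 0"
      using tendsto_mult_right_zero[OF noise_energy_tendsto_zero] unfolding E_def .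
  qed
  moreover have "(\<integral>\<^sup>+\<omega>. ennreal (f k \<omega>) \<partial>M) \<le> ennreal (\<beta> k)" for k
  proof (induction k)
    case 0
    have "(\<integral>\<^sup>+\<omega>. ennreal (f 0 \<omega>) \<partial>M) \<le> (\<integral>\<^sup>+\<omega>. ennreal a \<partial>M)"
      using init by (intro nn_integral_mono) (simp add: ennreal_leI)
    then show ?case by (simp add: \<beta>_simps emeasure_space_1)
  next
    case (Suc k)
    have "(\<integral>\<^sup>+\<omega>. ennreal (f (Suc k) \<omega>) \<partial>M)
        \<le> (\<integral>\<^sup>+\<omega>. ennreal \<rho> * ennreal (f k \<omega>) + ennreal D * ennreal (\<Sum>i\<in>UNIV. (\<eta> i k \<omega>)\<^sup>2) \<partial>M)"
      using step \<rho> D nonneg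
      by (intro nn_integral_mono) (simp add: ennreal_leI ennreal_mult[symmetric] ennreal_plus[symmetric]
          sum_nonneg del: ennreal_plus)
    also have "\<dots> = ennreal \<rho> * (\<integral>\<^sup>+\<omega>. ennreal (f k \<omega>) \<partial>M) + ennreal D * ennreal (E k)"
      by (simp add: nn_integral_add nn_integral_cmult nn_integral_sum_noise_square E_def)
    also have "\<dots> \<le> ennreal \<rho> * ennreal (\<beta> k) + ennreal D * ennreal (E k)"
      by (intro add_mono mult_left_mono Suc.IH) auto
    also have "\<dots> = ennreal (\<beta> (Suc k))"
      using \<rho> D \<beta>_nonneg E_nonneg
      by (simp add: \<beta>_simps ennreal_mult[symmetric] ennreal_plus[symmetric] del: ennreal_plus)
    finally show ?case .
  qed
  ultimately show ?thesis using \<beta>_nonneg by blast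
qed

lemma nn_integral_weighted_tail_square:
  "(\<integral>\<^sup>+\<omega>. (\<Sum>j. ennreal ((\<eta> i (j + k) \<omega>)\<^sup>2 / q i ^ (j + k))) \<partial>M)
    = ennreal (2 * (c i)\<^sup>2 * q i ^ k / (1 - q i))"
proof -
  have q: "0 < q i" "q i < 1" using q_pos q_less_1 by auto
  have "(\<lambda>j. 2 * (c i)\<^sup>2 * q i ^ k * q i ^ j) sums (2 * (c i)\<^sup>2 * q i ^ k * (1 / (1 - q i)))"
    by (intro sums_mult geometric_sums) (use q in auto)
  then have geo: "(\<lambda>j. 2 * (c i)\<^sup>2 * q i ^ (j + k)) sums (2 * (c i)\<^sup>2 * q i ^ k / (1 - q i))"
    by (simp add: power_add mult_ac)
  have summand: "(\<integral>\<^sup>+\<omega>. ennreal ((\<eta> i (j + k) \<omega>)\<^sup>2 / q i ^ (j + k)) \<partial>M) = ennreal (2 * (c i)\<^sup>2 * q i ^ (j + k))"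
    for j
  proof -
    have "(\<integral>\<^sup>+\<omega>. ennreal ((\<eta> i (j + k) \<omega>)\<^sup>2 / q i ^ (j + k)) \<partial>M)
        = (\<integral>\<^sup>+\<omega>. ennreal ((\<eta> i (j + k) \<omega>)\<^sup>2) * ennreal (1 / q i ^ (j + k)) \<partial>M)"
      using q by (intro nn_integral_cong) (simp add: ennreal_mult[symmetric])
    also have "\<dots> = ennreal (2 * (c i * q i ^ (j + k))\<^sup>2) * ennreal (1 / q i ^ (j + k))"
      by (simp add: nn_integral_multc nn_integral_noise_square)
    also have "\<dots> = ennreal (2 * (c i * q i ^ (j + k))\<^sup>2 * (1 / q i ^ (j + k)))"
      using q by (intro ennreal_mult[symmetric]) auto
    also have "2 * (c i * q i ^ (j + k))\<^sup>2 * (1 / q i ^ (j + k)) = 2 * (c i)\<^sup>2 * q i ^ (j + k)"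
      using q by (simp add: power2_eq_square field_simps)
    finally show ?thesis .
  qed
  have "(\<integral>\<^sup>+\<omega>. (\<Sum>j. ennreal ((\<eta> i (j + k) \<omega>)\<^sup>2 / q i ^ (j + k))) \<partial>M)
      = (\<Sum>j. ennreal (2 * (c i)\<^sup>2 * q i ^ (j + k)))"
    by (simp add: nn_integral_suminf summand)
  also have "\<dots> = ennreal (2 * (c i)\<^sup>2 * q i ^ k / (1 - q i))"
    using geo q by (simp add: suminf_ennreal2 sums_summable sums_iff)
  finally show ?thesis .
qed

lemma nn_integral_weighted_tails_tendsto_zero:
  "\<exists>\<tau>. (\<forall>k. 0 \<le> \<tau> k) \<and> \<tau> \<longlonglongrightarrow> 0 \<and> (\<forall>k. (\<integral>\<^sup>+\<omega>. (\<Sum>i\<in>UNIV. ennreal (4 * q i ^ k / (1 - q i))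
      * (\<Sum>j. ennreal ((\<eta> i (j + k) \<omega>)\<^sup>2 / q i ^ (j + k)))) \<partial>M) \<le> ennreal (\<tau> k))"
proof -
  define a where "a i k = 4 * q i ^ k / (1 - q i)" for i k
  define b where "b i k = 2 * (c i)\<^sup>2 * q i ^ k / (1 - q i)" for i k
  have nonneg: "0 \<le> a i k" "0 \<le> b i k" for i k
    using q_pos[of i] q_less_1[of i] by (auto simp: a_def b_def)
  have "(\<lambda>k. a i k * b i k) \<longlonglongrightarrow> 0" for i
    unfolding a_def b_def using q_pos[of i] q_less_1[of i]
    by (intro tendsto_mult_zero tendsto_divide_zero tendsto_mult_right_zero LIMSEQ_power_zero) auto
  then have "(\<lambda>k. \<Sum>i\<in>UNIV. a i k * b i k) \<longlonglongrightarrow> 0"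
    using tendsto_sum[of UNIV "\<lambda>i k. a i k * b i k" "\<lambda>_. 0"] by simp
  moreover have "(\<integral>\<^sup>+\<omega>. (\<Sum>i\<in>UNIV. ennreal (a i k)
      * (\<Sum>j. ennreal ((\<eta> i (j + k) \<omega>)\<^sup>2 / q i ^ (j + k)))) \<partial>M) = ennreal (\<Sum>i\<in>UNIV. a i k * b i k)" for k
    by (simp add: nn_integral_sum nn_integral_cmult nn_integral_weighted_tail_square b_def[symmetric]
        sum_ennreal[symmetric] ennreal_mult[OF nonneg] mult_nonneg_nonneg[OF nonneg] del: sum_ennreal)
  ultimately show ?thesis
    unfolding a_def[symmetric] using nonneg
    by (intro exI[of _ "\<lambda>k. \<Sum>i\<in>UNIV. a i k * b i k"]) (auto intro: sum_nonneg)
qed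

lemma nn_integral_disagreement_tendsto_zero:
  fixes A :: "'n \<Rightarrow> 'n \<Rightarrow> real"
  assumes sym: "\<And>i j. A i j = A j i" and nonneg: "\<And>i j. 0 \<le> A i j"
    and conn: "graph_connected A" and h_pos: "0 < h" and h_lt: "h * dmax A < 1"
    and s_bound: "\<And>i. \<bar>s i\<bar> \<le> 2"
  shows "\<exists>\<beta>. (\<forall>k. 0 \<le> \<beta> k) \<and> \<beta> \<longlonglongrightarrow> 0 \<and>
    (\<forall>k. (\<integral>\<^sup>+\<omega>. ennreal (disagreement (theta A h s t0 (\<lambda>i j. \<eta> i j \<omega>) k)) \<partial>M) \<le> ennreal (\<beta> k))"
proof -
  obtain \<rho> D where \<rho>D: "0 \<le> \<rho>" "\<rho> < 1" "0 \<le> D"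
    and step: "\<And>t0 e k. disagreement (theta A h s t0 e (Suc k))
      \<le> \<rho> * disagreement (theta A h s t0 e k) + D * (\<Sum>i\<in>UNIV. (e i k)\<^sup>2)"
    using disagreement_theta_Suc_le[of A h s, OF sym nonneg conn h_pos h_lt s_bound] by blast
  show ?thesis
    by (rule nn_integral_contracting_process_tendsto_zero[OF \<rho>D, where a = "disagreement t0"])
      (measurable, rule disagreement_nonneg, simp, rule step)
qed

lemma nn_integral_consensus_error_tendsto_zero:
  fixes A :: "'n \<Rightarrow> 'n \<Rightarrow> real"
  assumes sym: "\<And>i j. A i j = A j i" and nonneg: "\<And>i j. 0 \<le> A i j"
    and conn: "graph_connected A" and h_pos: "0 < h" and h_lt: "h * dmax A < 1"
    and s_bound: "\<And>i. \<bar>s i\<bar> \<le> 2"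
  shows "\<exists>b. b \<longlonglongrightarrow> 0 \<and> (\<forall>k. (\<integral>\<^sup>+\<omega>. ennreal (\<Sum>i\<in>UNIV. (theta A h s t0 (\<lambda>i j. \<eta> i j \<omega>) k i
      - (Ave t0 + (\<Sum>i\<in>UNIV. s i / real CARD('n) * (\<Sum>j. \<eta> i j \<omega>))))\<^sup>2) \<partial>M) \<le> ennreal (b k))"
proof -
  have q: "0 < q i \<and> q i < 1" for i using q_pos q_less_1 by auto
  obtain \<beta> where \<beta>: "\<And>k. 0 \<le> \<beta> k" "\<beta> \<longlonglongrightarrow> 0"
    "\<And>k. (\<integral>\<^sup>+\<omega>. ennreal (disagreement (theta A h s t0 (\<lambda>i j. \<eta> i j \<omega>) k)) \<partial>M) \<le> ennreal (\<beta> k)"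
    using nn_integral_disagreement_tendsto_zero[of A h s t0, OF sym nonneg conn h_pos h_lt s_bound] by blast
  obtain \<tau> where \<tau>: "\<And>k. 0 \<le> \<tau> k" "\<tau> \<longlonglongrightarrow> 0"
    "\<And>k. (\<integral>\<^sup>+\<omega>. (\<Sum>i\<in>UNIV. ennreal (4 * q i ^ k / (1 - q i))
      * (\<Sum>j. ennreal ((\<eta> i (j + k) \<omega>)\<^sup>2 / q i ^ (j + k)))) \<partial>M) \<le> ennreal (\<tau> k)"
    using nn_integral_weighted_tails_tendsto_zero by blast
  have "(\<integral>\<^sup>+\<omega>. ennreal (\<Sum>i\<in>UNIV. (theta A h s t0 (\<lambda>i j. \<eta> i j \<omega>) k i
      - (Ave t0 + (\<Sum>i\<in>UNIV. s i / real CARD('n) * (\<Sum>j. \<eta> i j \<omega>))))\<^sup>2) \<partial>M)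
    \<le> (\<integral>\<^sup>+\<omega>. ennreal (disagreement (theta A h s t0 (\<lambda>i j. \<eta> i j \<omega>) k))
      + (\<Sum>i\<in>UNIV. ennreal (4 * q i ^ k / (1 - q i)) * (\<Sum>j. ennreal ((\<eta> i (j + k) \<omega>)\<^sup>2 / q i ^ (j + k)))) \<partial>M)"
    for k by (intro nn_integral_mono consensus_error_le sym q s_bound)
  also have "\<dots> k \<le> ennreal (\<beta> k + \<tau> k)" for k
    using \<beta>(1,3) \<tau>(1,3) by (simp add: nn_integral_add add_mono ennreal_plus)
  finally show ?thesis using tendsto_add[OF \<beta>(2) \<tau>(2)] by auto
qed

end

theorem mainTheorem3:
  fixes M :: "'a measure"
    and A :: "'n::finite \<Rightarrow> 'n \<Rightarrow> real"
    and h :: real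
    and s c q :: "'n \<Rightarrow> real"
    and \<eta> :: "'n \<Rightarrow> nat \<Rightarrow> 'a \<Rightarrow> real"
    and \<theta>0 :: "'n \<Rightarrow> real"
  assumes "prob_space M"
    and sym: "\<And>i j. A i j = A j i"
    and nonneg: "\<And>i j. A i j \<ge> 0"
    and conn: "graph_connected A"
    and h_pos: "0 < h" and h_lt: "h * dmax A < 1"
    and s_range: "\<And>i. 0 < s i \<and> s i < 2"
    and c_pos: "\<And>i. 0 < c i"
    and q_range: "\<And>i. \<bar>s i - 1\<bar> < q i \<and> q i < 1"
    and indep: "prob_space.indep_vars M (\<lambda>_. borel) (\<lambda>(i, k). \<eta> i k) UNIV"
    and lap: "\<And>i k. distributed M lborel (\<eta> i k)
                 (\<lambda>x. ennreal (laplace_density (c i * q i ^ k) x))"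
  shows "let \<theta>inf = (\<lambda>\<omega>. Ave \<theta>0 + (\<Sum>i\<in>UNIV. s i / real CARD('n) * (\<Sum>j. \<eta> i j \<omega>)));
             err = (\<lambda>k \<omega>. \<Sum>i\<in>UNIV. (theta A h s \<theta>0 (\<lambda>i j. \<eta> i j \<omega>) k i - \<theta>inf \<omega>)\<^sup>2)
         in (\<forall>k. integrable M (err k)) \<and>
            (\<lambda>k. prob_space.expectation M (err k)) \<longlonglongrightarrow> 0"
proof -
  have q: "0 < q i \<and> q i < 1" for i using q_range[of i] by auto
  interpret laplace_noise M c q \<eta>
    using \<open>prob_space M\<close> c_pos q lap by (simp add: laplace_noise_def laplace_noise_axioms_def)
  have s_bound: "\<bar>s i\<bar> \<le> 2" for i using s_range[of i] by simp
  define err where "err = (\<lambda>k \<omega>. \<Sum>i\<in>UNIV. (theta A h s \<theta>0 (\<lambda>i j. \<eta> i j \<omega>) k i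
    - (Ave \<theta>0 + (\<Sum>i\<in>UNIV. s i / real CARD('n) * (\<Sum>j. \<eta> i j \<omega>))))\<^sup>2)"
  obtain b where "b \<longlonglongrightarrow> 0" "\<And>k. (\<integral>\<^sup>+\<omega>. ennreal (err k \<omega>) \<partial>M) \<le> ennreal (b k)"
    using nn_integral_consensus_error_tendsto_zero[of A h s \<theta>0, OF sym nonneg conn h_pos h_lt s_bound]
    unfolding err_def by blast
  moreover have "err k \<in> borel_measurable M" "0 \<le> err k \<omega>" for k \<omega>
    unfolding err_def Ave_def by (measurable, intro sum_nonneg) simp
  ultimately have "(\<forall>k. integrable M (err k)) \<and> (\<lambda>k. expectation (err k)) \<longlonglongrightarrow> 0"
    by (intro integrable_and_integral_tendsto_zero)
  then show ?thesis unfolding Let_def err_def .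
qed

end
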